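(* In the Mahi-Mahi protocol, if an honest validator directly commits some block in a leader slot $s$, then no other honest validator decides to skip the slot $s$ (neither directly nor indirectly).
   Context: Setting: $n=3f+1$ validators, at most $f$ Byzantine; honest validators create exactly one block per round, Byzantine ones may equivocate. Each valid block of round $r$ references (parents) at least $2f+1$ blocks of round $r-1$. Each validator has a local DAG of valid blocks, containing a block only with all its causal history. There is a path from $b$ to $b'$ if $b'$ is reached from $b$ along parent references. A block $b$ of round $r'$ is a vote for a block $L$ of round $r<r'$ with author $a$ if the first block with author $a$ and round $r$ met in the deterministic depth-first search from $b$ is $L$. With wave length $w\in\{4,5\}$, a block of round $r+w-1$ is a certificate for a block $L$ of round $r$ if at least $2f+1$ of its parents are votes for $L$. Leader slots of round $r$ are pairs (validator, $r$) chosen by a global common coin, identical for all validators, totally ordered by round then coin order. A validator classifies slots: direct skip if its local DAG has $2f+1$ blocks of round $r+w-2$ that are not votes for the block $L$ in the slot; direct commit of $L$ if it has $2f+1$ round-$(r+w-1)$ certificates for $L$; otherwise the indirect rule: with anchor the first slot (in slot order) of round $>r+w-1$ not classified as skip, if the anchor is committed with block $A$, commit $L$ if there is a certificate $c$ for $L$ with a path from $A$ to $c$, else skip; if the anchor is undecided, the slot is undecided. *)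

theory Defs
  imports Main
begin

text \<open>Protocol parameters (global, identical for all validators):
  auth b   : author of block b (validators are 0 ..< 3f+1)
  rnd b    : round of block b
  par b    : ordered list of parent references of b (order fixes the deterministic DFS)
  nf       : the fault bound f (n = 3f+1)
  wl       : the wave length w
  leaders r: leader slots of round r in common-coin order (slot (r,i) has leader leaders r ! i)\<close>

record 'b sys =
  auth :: "'b \<Rightarrow> nat"
  rnd :: "'b \<Rightarrow> nat"
  par :: "'b \<Rightarrow> 'b list"
  nf :: nat
  wl :: nat
  leaders :: "nat \<Rightarrow> nat list"

datatype 'b status = Commit 'b | Skip | Undecided

definition valid_block :: "'b sys \<Rightarrow> 'b set \<Rightarrow> 'b \<Rightarrow> bool" where
  "valid_block S B b \<longleftrightarrow>
     (rnd S b = 0 \<longrightarrow> par S b = []) \<and>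
     (0 < rnd S b \<longrightarrow> (\<forall>p\<in>set (par S b). p \<in> B \<and> rnd S p = rnd S b - 1)
                     \<and> 2 * nf S + 1 \<le> card (auth S ` set (par S b)))"

definition local_dag :: "'b sys \<Rightarrow> 'b set \<Rightarrow> 'b set \<Rightarrow> bool" where
  "local_dag S B D \<longleftrightarrow> finite D \<and> D \<subseteq> B \<and> (\<forall>b\<in>D. set (par S b) \<subseteq> D)"

text \<open>Preorder depth-first traversal (with fuel = depth). The sequence of first occurrences
  equals the visit order of the DFS with a visited set.\<close>
primrec trav :: "('b \<Rightarrow> 'b list) \<Rightarrow> nat \<Rightarrow> 'b \<Rightarrow> 'b list" where
  "trav p 0 b = [b]"
| "trav p (Suc k) b = b # concat (map (trav p k) (p b))"

definition dfs_order :: "'b sys \<Rightarrow> 'b \<Rightarrow> 'b list" where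
  "dfs_order S b = trav (par S) (rnd S b) b"

definition is_vote :: "'b sys \<Rightarrow> 'b \<Rightarrow> 'b \<Rightarrow> bool" where
  "is_vote S b L \<longleftrightarrow> rnd S L < rnd S b \<and>
     find (\<lambda>x. auth S x = auth S L \<and> rnd S x = rnd S L) (dfs_order S b) = Some L"

definition is_cert :: "'b sys \<Rightarrow> 'b \<Rightarrow> 'b \<Rightarrow> bool" where
  "is_cert S c L \<longleftrightarrow> rnd S c = rnd S L + wl S - 1 \<and>
     2 * nf S + 1 \<le> card (auth S ` {p \<in> set (par S c). is_vote S p L})"

definition path :: "'b sys \<Rightarrow> 'b \<Rightarrow> 'b \<Rightarrow> bool" where
  "path S b b' \<longleftrightarrow> (b, b') \<in> {(x, y). y \<in> set (par S x)}\<^sup>*"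

definition in_slot :: "'b sys \<Rightarrow> nat \<times> nat \<Rightarrow> 'b \<Rightarrow> bool" where
  "in_slot S s L \<longleftrightarrow> auth S L = leaders S (fst s) ! snd s \<and> rnd S L = fst s"

definition direct_skip :: "'b sys \<Rightarrow> 'b set \<Rightarrow> nat \<times> nat \<Rightarrow> bool" where
  "direct_skip S D s \<longleftrightarrow>
     2 * nf S + 1 \<le> card (auth S ` {b \<in> D. rnd S b = fst s + wl S - 2 \<and>
                                      \<not> (\<exists>L. in_slot S s L \<and> is_vote S b L)})"

definition direct_commit :: "'b sys \<Rightarrow> 'b set \<Rightarrow> nat \<times> nat \<Rightarrow> 'b \<Rightarrow> bool" where
  "direct_commit S D s L \<longleftrightarrow> L \<in> D \<and> in_slot S s L \<and>
     2 * nf S + 1 \<le> card (auth S ` {c \<in> D. is_cert S c L})"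

definition maxround :: "'b sys \<Rightarrow> 'b set \<Rightarrow> nat" where
  "maxround S D = Max (rnd S ` D)"

definition slots_between :: "'b sys \<Rightarrow> nat \<Rightarrow> nat \<Rightarrow> (nat \<times> nat) list" where
  "slots_between S lo hi =
     concat (map (\<lambda>r'. map (\<lambda>j. (r', j)) [0..<length (leaders S r')]) [lo..<Suc hi])"

text \<open>Decision rule (with recursion fuel). The anchor is the first slot of round > r+w-1 not
  classified as skip; slots beyond the highest round of the DAG are never decided.\<close>
primrec dec :: "nat \<Rightarrow> 'b sys \<Rightarrow> 'b set \<Rightarrow> nat \<times> nat \<Rightarrow> 'b status" where
  "dec 0 S D s = Undecided"
| "dec (Suc k) S D s =
    (if direct_skip S D s then Skip
     else if (\<exists>L. direct_commit S D s L) then Commit (SOME L. direct_commit S D s L)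
     else (case find (\<lambda>s'. dec k S D s' \<noteq> Skip)
                     (slots_between S (fst s + wl S) (maxround S D)) of
             None \<Rightarrow> Undecided
           | Some s' \<Rightarrow>
               (case dec k S D s' of
                  Commit A \<Rightarrow>
                    (if (\<exists>L c. in_slot S s L \<and> c \<in> D \<and> is_cert S c L \<and> path S A c)
                     then Commit (SOME L. \<exists>c. in_slot S s L \<and> c \<in> D \<and> is_cert S c L \<and> path S A c)
                     else Skip)
                | _ \<Rightarrow> Undecided)))"

text \<open>Fuel maxround+1 suffices: nested calls increase the round by at least w and only
  concern rounds up to maxround.\<close>
definition decide :: "'b sys \<Rightarrow> 'b set \<Rightarrow> nat \<times> nat \<Rightarrow> 'b status" where
  "decide S D s = dec (Suc (maxround S D)) S D s"

end

theory Submission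
  imports Defs
begin

text \<open>Any two sets of at least 2f+1 authors out of 3f+1 share an honest author. A direct
  commit of L rests on a certificate whose 2f+1 parents vote for L, while a direct skip needs
  2f+1 non-voters of the same round; an honest common author yields one block that both votes
  and does not vote for L. An indirect skip needs a committed anchor A above the certificate
  round; A reaches blocks of 2f+1 authors in the certificate round, so again through an
  honest author it reaches one of the 2f+1 certificates for L, and the indirect rule commits.\<close>

abbreviation is_quorum :: "'b sys \<Rightarrow> 'b set \<Rightarrow> bool" where
  "is_quorum S X \<equiv> 2 * nf S + 1 \<le> card (auth S ` X)"

lemma quorum_nonempty: "is_quorum S X \<Longrightarrow> X \<noteq> {}"
  by auto

lemma quorums_share_honest_member:
  assumes "finite U" "X \<subseteq> U" "Y \<subseteq> U" "card U + card (U - H) < card X + card Y"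
  shows "\<exists>a\<in>H. a \<in> X \<and> a \<in> Y"
proof (rule ccontr)
  assume "\<not> ?thesis"
  then have "X \<inter> Y \<subseteq> U - H"
    using assms(2) by auto
  have "card X + card Y = card (X \<union> Y) + card (X \<inter> Y)"
    using assms(1-3) by (intro card_Un_Int) (auto intro: finite_subset)
  also have "\<dots> \<le> card U + card (U - H)"
    using assms(1-3) \<open>X \<inter> Y \<subseteq> U - H\<close> by (intro add_mono card_mono) auto
  finally show False
    using assms(4) by linarith
qed

lemma path_parent: "p \<in> set (par S b) \<Longrightarrow> path S b p"
  unfolding path_def by auto

lemma path_trans: "path S a b \<Longrightarrow> path S b c \<Longrightarrow> path S a c"
  unfolding path_def by (meson rtrancl_trans)

lemma path_trav: "x \<in> set (trav (par S) k b) \<Longrightarrow> path S b x"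
proof (induction k arbitrary: b)
  case 0
  then show ?case
    by (simp add: path_def)
next
  case (Suc k)
  show ?case
  proof (cases "x = b")
    case True
    then show ?thesis
      by (simp add: path_def)
  next
    case False
    then obtain p where "p \<in> set (par S b)" "x \<in> set (trav (par S) k p)"
      using Suc.prems by auto
    then show ?thesis
      using Suc.IH path_parent path_trans by metis
  qed
qed

lemma vote_path: "is_vote S b L \<Longrightarrow> path S b L"
  unfolding is_vote_def dfs_order_def by (metis find_Some_iff nth_mem path_trav)

lemma cert_path: "is_cert S c L \<Longrightarrow> path S c L"
proof -
  assume "is_cert S c L"
  then have "{p \<in> set (par S c). is_vote S p L} \<noteq> {}"
    unfolding is_cert_def by (intro quorum_nonempty[of S]) simp
  then obtain p where "p \<in> set (par S c)" "is_vote S p L"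
    by auto
  then show "path S c L"
    using path_parent path_trans vote_path by metis
qed

lemma local_dag_path_closed:
  assumes "local_dag S B D" "b \<in> D" "path S b x"
  shows "x \<in> D"
proof -
  have "(b, x) \<in> {(x, y). y \<in> set (par S x)}\<^sup>*"
    using assms(3) by (simp add: path_def)
  then show ?thesis
    by induction (use assms(1,2) in \<open>auto simp: local_dag_def\<close>)
qed

lemma dec_Commit_cases:
  assumes "dec k S D s = Commit A"
  shows "direct_commit S D s A \<or> (\<exists>c\<in>D. in_slot S s A \<and> is_cert S c A)"
proof (cases k)
  case 0
  with assms show ?thesis
    by simp
next
  case (Suc k')
  show ?thesis
  proof (cases "\<exists>L. direct_commit S D s L")
    case True
    then have "A = (SOME L. direct_commit S D s L)"
      using assms Suc by (simp split: if_splits)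
    then show ?thesis
      using True someI_ex by metis
  next
    case False
    then obtain A' where
      "A = (SOME L. \<exists>c. in_slot S s L \<and> c \<in> D \<and> is_cert S c L \<and> path S A' c)"
      "\<exists>L c. in_slot S s L \<and> c \<in> D \<and> is_cert S c L \<and> path S A' c"
      using assms Suc by (simp split: if_splits option.splits status.splits) blast
    then show ?thesis
      using someI_ex[of "\<lambda>L. \<exists>c. in_slot S s L \<and> c \<in> D \<and> is_cert S c L \<and> path S A' c"] by blast
  qed
qed

lemma dec_Commit_in_slot:
  assumes "local_dag S B D" "dec k S D s = Commit A"
  shows "A \<in> D \<and> in_slot S s A"
  using dec_Commit_cases[OF assms(2)]
proof
  assume "direct_commit S D s A"
  then show ?thesis
    by (simp add: direct_commit_def)
next
  assume "\<exists>c\<in>D. in_slot S s A \<and> is_cert S c A"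
  then obtain c where "c \<in> D" "is_cert S c A" "in_slot S s A"
    by blast
  then show ?thesis
    using local_dag_path_closed[OF assms(1) _ cert_path] by blast
qed

locale byzantine_dag =
  fixes S :: "'b sys" and B :: "'b set" and Hon :: "nat set"
  assumes authors_bounded: "\<forall>b\<in>B. auth S b < 3 * nf S + 1"
    and few_byzantine: "card ({..<3 * nf S + 1} - Hon) \<le> nf S"
    and blocks_valid: "\<forall>b\<in>B. valid_block S B b"
    and no_equivocation: "\<forall>b1\<in>B. \<forall>b2\<in>B. auth S b1 \<in> Hon \<longrightarrow> auth S b1 = auth S b2 \<longrightarrow>
            rnd S b1 = rnd S b2 \<longrightarrow> b1 = b2"
begin

lemma parents_valid:
  assumes "b \<in> B" "0 < rnd S b"
  shows "\<forall>p\<in>set (par S b). p \<in> B \<and> rnd S p = rnd S b - 1" "is_quorum S (set (par S b))"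
  using blocks_valid assms unfolding valid_block_def by blast+

lemma finite_authors:
  assumes "X \<subseteq> B"
  shows "finite (auth S ` X)"
proof (rule finite_subset)
  show "auth S ` X \<subseteq> {..<3 * nf S + 1}"
    using assms authors_bounded by auto
qed simp

lemma quorums_share_block:
  assumes "X \<subseteq> B" "Y \<subseteq> B" "\<forall>b\<in>X \<union> Y. rnd S b = R"
    and "is_quorum S X" "is_quorum S Y"
  shows "\<exists>b. b \<in> X \<and> b \<in> Y"
proof -
  have "\<exists>a\<in>Hon. a \<in> auth S ` X \<and> a \<in> auth S ` Y"
    using assms(1,2,4,5) authors_bounded few_byzantine
    by (intro quorums_share_honest_member[of "{..<3 * nf S + 1}"]) auto
  then obtain x y where "x \<in> X" "y \<in> Y" "auth S x \<in> Hon" "auth S x = auth S y"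
    by auto
  moreover have "x \<in> B" "y \<in> B" "rnd S x = rnd S y"
    using calculation assms(1-3) by auto
  ultimately show ?thesis
    using no_equivocation by metis
qed

lemma quorum_mono: "X \<subseteq> Y \<Longrightarrow> Y \<subseteq> B \<Longrightarrow> is_quorum S X \<Longrightarrow> is_quorum S Y"
  using card_mono[OF finite_authors image_mono] le_trans by blast

lemma quorum_below:
  assumes "b \<in> B" "R < rnd S b"
  shows "is_quorum S {x \<in> B. rnd S x = R \<and> path S b x}"
  using assms
proof (induction "rnd S b" arbitrary: b rule: less_induct)
  case less
  let ?Reach = "\<lambda>b. {x \<in> B. rnd S x = R \<and> path S b x}"
  have "0 < rnd S b"
    using less.prems(2) by simp
  note parents = parents_valid[OF less.prems(1) this]
  show ?case
  proof (cases "rnd S b = Suc R")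
    case True
    then have "set (par S b) \<subseteq> ?Reach b"
      using parents(1) path_parent by auto
    then show ?thesis
      using parents(2) less.prems(2) quorum_mono by auto
  next
    case False
    obtain p where p: "p \<in> set (par S b)"
      using quorum_nonempty[OF parents(2)] by (meson ex_in_conv)
    then have "?Reach p \<subseteq> ?Reach b"
      using path_trans[OF path_parent[OF p]] by blast
    moreover have "is_quorum S (?Reach p)"
      using p parents(1) less.prems False by (intro less.hyps) auto
    ultimately show ?thesis
      using quorum_mono by auto
  qed
qed

lemma direct_commit_not_direct_skip:
  assumes "2 \<le> wl S" "D \<subseteq> B" "D' \<subseteq> B" "direct_commit S D s L"
  shows "\<not> direct_skip S D' s"
proof
  assume skip: "direct_skip S D' s"
  obtain c where c: "c \<in> D" "is_cert S c L"
    using assms(4) quorum_nonempty unfolding direct_commit_def by blast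
  have "rnd S L = fst s"
    using assms(4) unfolding direct_commit_def in_slot_def by simp
  then have rnd_c: "rnd S c = fst s + wl S - 1"
    using c(2) unfolding is_cert_def by simp
  let ?Voters = "{p \<in> set (par S c). is_vote S p L}"
  let ?Skippers = "{b \<in> D'. rnd S b = fst s + wl S - 2 \<and> \<not> (\<exists>L. in_slot S s L \<and> is_vote S b L)}"
  have "\<forall>p\<in>set (par S c). p \<in> B \<and> rnd S p = fst s + wl S - 2"
    using parents_valid(1)[of c] c(1) assms(1,2) rnd_c by auto
  moreover have "is_quorum S ?Voters"
    using c(2) unfolding is_cert_def by simp
  moreover have "is_quorum S ?Skippers"
    using skip unfolding direct_skip_def .
  ultimately obtain b where "b \<in> ?Voters" "b \<in> ?Skippers"
    using quorums_share_block[of ?Voters ?Skippers] assms(3) by blast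
  then show False
    using assms(4) unfolding direct_commit_def by blast
qed

lemma certificate_reached:
  assumes "local_dag S B D'" "A \<in> D'" "D \<subseteq> B"
    and "is_quorum S {c \<in> D. is_cert S c L}" "rnd S L + wl S - 1 < rnd S A"
  shows "\<exists>c\<in>D'. is_cert S c L \<and> path S A c"
proof -
  let ?R = "rnd S L + wl S - 1"
  let ?Reached = "{x \<in> B. rnd S x = ?R \<and> path S A x}"
  let ?Certs = "{c \<in> D. is_cert S c L}"
  have "A \<in> B"
    using assms(1,2) unfolding local_dag_def by blast
  then have "is_quorum S ?Reached"
    using assms(5) by (rule quorum_below)
  moreover have "\<forall>x\<in>?Reached \<union> ?Certs. rnd S x = ?R"
    unfolding is_cert_def by auto
  ultimately obtain c where "c \<in> ?Reached" "c \<in> ?Certs"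
    using quorums_share_block[of ?Reached ?Certs ?R] assms(3,4) by blast
  then show ?thesis
    using local_dag_path_closed[OF assms(1,2)] by blast
qed

end

lemma anchor_round:
  assumes "find P (slots_between S lo hi) = Some s'" "in_slot S s' A"
  shows "lo \<le> rnd S A"
proof -
  have "s' \<in> set (slots_between S lo hi)"
    using assms(1) by (metis find_Some_iff nth_mem)
  then show ?thesis
    using assms(2) unfolding slots_between_def in_slot_def by auto
qed

theorem lemma4:
  fixes S :: "'b sys" and B :: "'b set" and Hon :: "nat set" and D :: "nat \<Rightarrow> 'b set"
    and v v' r i :: nat and L :: 'b
  assumes "wl S \<in> {4, 5}"
    and "\<forall>b\<in>B. auth S b < 3 * nf S + 1"
    and "Hon \<subseteq> {..<3 * nf S + 1}"
    and "card ({..<3 * nf S + 1} - Hon) \<le> nf S"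
    and "\<forall>b\<in>B. valid_block S B b"
    and "\<forall>b1\<in>B. \<forall>b2\<in>B. auth S b1 \<in> Hon \<longrightarrow> auth S b1 = auth S b2 \<longrightarrow>
            rnd S b1 = rnd S b2 \<longrightarrow> b1 = b2"
    and "\<forall>r'. distinct (leaders S r') \<and> set (leaders S r') \<subseteq> {..<3 * nf S + 1}"
    and "\<forall>u\<in>Hon. local_dag S B (D u)"
    and "v \<in> Hon" and "v' \<in> Hon"
    and "i < length (leaders S r)"
    and "direct_commit S (D v) (r, i) L"
  shows "decide S (D v') (r, i) \<noteq> Skip"
proof
  \<comment> \<open>Neither Hon \<subseteq> {..<3f+1} nor the hypotheses on the leader lists and on i are needed.\<close>
  assume skip: "decide S (D v') (r, i) = Skip"
  interpret byzantine_dag S B Hon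
    using assms(2,4,5,6) by unfold_locales
  have dags: "local_dag S B (D v)" "local_dag S B (D v')"
    using assms(8-10) by auto
  then have "D v \<subseteq> B" "D v' \<subseteq> B"
    unfolding local_dag_def by auto
  then have "\<not> direct_skip S (D v') (r, i)"
    using direct_commit_not_direct_skip assms(1,12) by auto
  then obtain s' A where
    anchor: "find (\<lambda>s'. dec (maxround S (D v')) S (D v') s' \<noteq> Skip)
        (slots_between S (r + wl S) (maxround S (D v'))) = Some s'"
    and committed: "dec (maxround S (D v')) S (D v') s' = Commit A"
    and no_cert: "\<not> (\<exists>L c. in_slot S (r, i) L \<and> c \<in> D v' \<and> is_cert S c L \<and> path S A c)"
    using skip unfolding decide_def by (auto split: option.splits status.splits if_splits)
  have "rnd S L = r" "in_slot S (r, i) L" "is_quorum S {c \<in> D v. is_cert S c L}"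
    using assms(12) unfolding direct_commit_def in_slot_def by auto
  moreover have "A \<in> D v'" "r + wl S \<le> rnd S A"
    using dec_Commit_in_slot[OF dags(2) committed] anchor_round[OF anchor] by auto
  ultimately show False
    using certificate_reached[OF dags(2) _ \<open>D v \<subseteq> B\<close>, of A L] assms(1) no_cert by auto
qed

end
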